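(* Let $r\ge1$, $n$ be integers and let $\sigma,\sigma':\mathbb{Z}_n\to\{0,1\}$ satisfy $\mathrm{maj}_r(\sigma)=\sigma'$. For every block $[i,j]\in B(\sigma')$, the number of blocks in the block interval $[f^{\leftarrow}_{\sigma,\sigma'}([i,j]),f^{\rightarrow}_{\sigma,\sigma'}([i,j])]_{B(\sigma)}$ is odd.
   Context: Cells are elements of $\mathbb{Z}_n$, arithmetic mod $n$; $[a,b]$ denotes the cyclic interval $a,\dots,b$. The majority rule with radius $r$: $\mathrm{maj}_r(\sigma)(i)=0$ if among the cells of $[i-r,i+r]$ strictly more have value $0$ than $1$ under $\sigma$, and $=1$ otherwise. For $\beta\in\{0,1\}$, $B^\beta(\sigma)$ is the set of cell intervals $[i,j]$ with $\sigma(k)=\beta$ for all $k\in[i,j]$ and $\sigma(i-1)=\sigma(j+1)=1-\beta$ (maximal homogeneous blocks); $B(\sigma)=B^0(\sigma)\cup B^1(\sigma)$. For $[i,j]\in B(\sigma')$: the left mapping $f^{\leftarrow}_{\sigma,\sigma'}([i,j])$ is the block of $B(\sigma)$ containing cell $j-r$, and the right mapping $f^{\rightarrow}_{\sigma,\sigma'}([i,j])$ is the block of $B(\sigma)$ containing cell $i+r$. For blocks $X=[x,y]$, $X'=[x',y']$ and a set of blocks $B$, the block interval $[X,X']_B$ is the set of blocks $[i,j]\in B$ with $[i,j]\subseteq[x,y']$. *)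

theory Defs
  imports Main
begin

text \<open>Cells are the integers 0..n-1 (representing Z_n); every cell index is reduced mod n.
  Configurations are functions int => nat; only their values on 0..n-1 matter.\<close>

definition cells :: "int \<Rightarrow> int set" where
  "cells n = {0..<n}"

definition cint :: "int \<Rightarrow> int \<Rightarrow> int \<Rightarrow> int set" where
  "cint n a b = {(a + t) mod n | t. 0 \<le> t \<and> t \<le> (b - a) mod n}"

definition maj :: "int \<Rightarrow> nat \<Rightarrow> (int \<Rightarrow> nat) \<Rightarrow> int \<Rightarrow> nat" where
  "maj n r \<sigma> i =
     (if card {k \<in> cint n (i - int r) (i + int r). \<sigma> k = 0}
           > card {k \<in> cint n (i - int r) (i + int r). \<sigma> k = 1}
      then 0 else 1)"

definition blocks_of :: "int \<Rightarrow> nat \<Rightarrow> (int \<Rightarrow> nat) \<Rightarrow> (int \<times> int) set" where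
  "blocks_of n \<beta> \<sigma> = {(i, j). i \<in> cells n \<and> j \<in> cells n \<and>
      (\<forall>k \<in> cint n i j. \<sigma> k = \<beta>) \<and>
      \<sigma> ((i - 1) mod n) = 1 - \<beta> \<and> \<sigma> ((j + 1) mod n) = 1 - \<beta>}"

definition blocks :: "int \<Rightarrow> (int \<Rightarrow> nat) \<Rightarrow> (int \<times> int) set" where
  "blocks n \<sigma> = blocks_of n 0 \<sigma> \<union> blocks_of n 1 \<sigma>"

definition block_containing :: "int \<Rightarrow> (int \<Rightarrow> nat) \<Rightarrow> int \<Rightarrow> int \<times> int" where
  "block_containing n \<sigma> c = (THE X. X \<in> blocks n \<sigma> \<and> c mod n \<in> cint n (fst X) (snd X))"

definition left_map :: "int \<Rightarrow> nat \<Rightarrow> (int \<Rightarrow> nat) \<Rightarrow> int \<times> int \<Rightarrow> int \<times> int" where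
  "left_map n r \<sigma> B = block_containing n \<sigma> (snd B - int r)"

definition right_map :: "int \<Rightarrow> nat \<Rightarrow> (int \<Rightarrow> nat) \<Rightarrow> int \<times> int \<Rightarrow> int \<times> int" where
  "right_map n r \<sigma> B = block_containing n \<sigma> (fst B + int r)"

definition block_interval :: "int \<Rightarrow> int \<times> int \<Rightarrow> int \<times> int \<Rightarrow> (int \<times> int) set \<Rightarrow> (int \<times> int) set" where
  "block_interval n X X' B = {Y \<in> B. cint n (fst Y) (snd Y) \<subseteq> cint n (fst X) (snd X')}"

end

theory Submission
  imports Defs
begin

text \<open>
  If the majority value changes between the windows of cells k and k + 1, the two windows
  differ only in the cells k - r (dropped) and k + 1 + r (added), so the dropped cell carries the
  old majority value and the added cell the new one. For a block [i,j] of value \<beta> of the image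
  this gives \<sigma>(j - r) = \<sigma>(i + r) = \<beta>: the left and right images of [i,j] are blocks of the
  same value \<beta>. Blocks inside a cyclic interval that starts at a block start x and ends at a
  block end y correspond to the block starts in [x, y]; walking from x to y, the value changes
  once at every block start after x, so since \<sigma>(x) = \<sigma>(y) there is an even number of them,
  and together with x itself an odd number of blocks.
\<close>

section \<open>Cyclic intervals\<close>

lemma mod_shift_offset:
  fixes a t n :: int
  assumes "0 \<le> t" "t < n"
  shows "((a + t) mod n - a) mod n = t"
  using assms by (simp add: mod_diff_left_eq)

lemma mod_diff_add_eq:
  fixes a b c n :: int
  shows "(a mod n - b mod n + c) mod n = (a - b + c) mod n"
  by (metis mod_add_left_eq mod_diff_eq)

lemma cint_image: "cint n a b = (\<lambda>t. (a + t) mod n) ` {0..(b - a) mod n}"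
  unfolding cint_def by auto

lemma inj_on_mod_shift: "inj_on (\<lambda>t. (a + t) mod n) {0..<n::int}"
proof (rule inj_onI)
  fix s t assume s: "s \<in> {0..<n}" and t: "t \<in> {0..<n}"
    and eq: "(a + s) mod n = (a + t) mod n"
  have "s = ((a + s) mod n - a) mod n"
    using s mod_shift_offset[of s n a] by simp
  also have "\<dots> = ((a + t) mod n - a) mod n"
    by (simp only: eq)
  also have "\<dots> = t"
    using t mod_shift_offset[of t n a] by simp
  finally show "s = t" .
qed

lemma mod_in_cells: "n \<ge> 1 \<Longrightarrow> k mod n \<in> cells n"
  unfolding cells_def by (simp add: pos_mod_sign pos_mod_bound)

lemma cint_iff:
  assumes "n \<ge> 1"
  shows "c \<in> cint n a b \<longleftrightarrow> c \<in> cells n \<and> (c - a) mod n \<le> (b - a) mod n"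
proof
  assume "c \<in> cint n a b"
  then obtain t where t: "c = (a + t) mod n" "0 \<le> t" "t \<le> (b - a) mod n"
    unfolding cint_image by auto
  have "t < n"
    using t(3) pos_mod_bound[of n "b - a"] assms by linarith
  then have "(c - a) mod n = t"
    unfolding t(1) using t(2) by (rule mod_shift_offset[rotated])
  then show "c \<in> cells n \<and> (c - a) mod n \<le> (b - a) mod n"
    unfolding t(1) using t(3) mod_in_cells[OF assms] by simp
next
  assume c: "c \<in> cells n \<and> (c - a) mod n \<le> (b - a) mod n"
  then have "c = (a + (c - a) mod n) mod n"
    unfolding cells_def by (simp add: mod_add_right_eq)
  moreover have "0 \<le> (c - a) mod n"
    using assms by simp
  ultimately show "c \<in> cint n a b"
    unfolding cint_image using c by (intro image_eqI) auto
qed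

lemma cint_left_mem: "n \<ge> 1 \<Longrightarrow> a \<in> cells n \<Longrightarrow> a \<in> cint n a b"
  by (simp add: cint_iff)

lemma cint_right_mem: "n \<ge> 1 \<Longrightarrow> b \<in> cells n \<Longrightarrow> b \<in> cint n a b"
  by (simp add: cint_iff)

lemma cint_full: "n \<ge> 1 \<Longrightarrow> (b - a) mod n = n - 1 \<Longrightarrow> cint n a b = cells n"
  by (auto simp: cint_iff)

lemma cint_subset:
  assumes "n \<ge> 1" and "(p - x) mod n + (q - p) mod n \<le> (y - x) mod n"
  shows "cint n p q \<subseteq> cint n x y"
proof
  fix e assume "e \<in> cint n p q"
  then obtain s where s: "e = (p + s) mod n" "0 \<le> s" "s \<le> (q - p) mod n"
    unfolding cint_image by auto
  have "(x + ((p - x) mod n + s)) mod n = ((x + (p - x) mod n) mod n + s) mod n"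
    by (simp add: mod_add_left_eq add.assoc)
  also have "\<dots> = (p + s) mod n"
    by (simp add: mod_add_right_eq mod_add_left_eq)
  finally have "e = (x + ((p - x) mod n + s)) mod n"
    using s(1) by simp
  moreover have "(p - x) mod n + s \<in> {0..(y - x) mod n}"
    using s(2,3) assms by simp
  ultimately show "e \<in> cint n x y"
    unfolding cint_image by (rule image_eqI)
qed

lemma cint_mod_base: "cint n (a mod n + d) (a mod n + e) = cint n (a + d) (a + e)"
proof -
  have "(a mod n + d + t) mod n = (a + d + t) mod n" for t
    by (metis add.assoc mod_add_left_eq)
  then show ?thesis
    unfolding cint_image by simp
qed

section \<open>Sliding majority windows\<close>

definition majority :: "(int \<Rightarrow> nat) \<Rightarrow> int set \<Rightarrow> nat" where
  "majority \<sigma> W = (if card {k \<in> W. \<sigma> k = 0} > card {k \<in> W. \<sigma> k = 1} then 0 else 1)"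

lemma maj_eq_majority: "maj n r \<sigma> k = majority \<sigma> (cint n (k - int r) (k + int r))"
  unfolding maj_def majority_def by (rule refl)

lemma maj_mod: "maj n r \<sigma> (k mod n) = maj n r \<sigma> k"
  unfolding maj_eq_majority using cint_mod_base[where a = k and d = "- int r" and e = "int r"] by simp

lemma card_filter_exchange:
  assumes "finite W" "a \<in> W" "b \<notin> W"
  shows "card {k \<in> insert b (W - {a}). P k}
    = card {k \<in> W. P k} - (if P a then 1 else 0) + (if P b then 1 else 0)"
proof -
  have "{k \<in> insert b (W - {a}). P k}
      = (if P b then insert b ({k \<in> W. P k} - {a}) else {k \<in> W. P k} - {a})"
    by auto
  moreover have "card ({k \<in> W. P k} - {a}) = card {k \<in> W. P k} - (if P a then 1 else 0)"
    using assms(1,2) by (simp add: card_Diff_singleton_if)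
  ultimately show ?thesis
    using assms by simp
qed

lemma majority_exchange:
  assumes "finite W" "a \<in> W" "b \<notin> W" "\<sigma> a \<in> {0, 1}" "\<sigma> b \<in> {0, 1}"
    and "\<sigma> a \<noteq> majority \<sigma> W"
  shows "majority \<sigma> (insert b (W - {a})) = majority \<sigma> W"
proof -
  define zeros where "zeros = card {k \<in> W. \<sigma> k = 0}"
  define ones where "ones = card {k \<in> W. \<sigma> k = 1}"
  have "\<sigma> a = 0 \<Longrightarrow> zeros \<ge> 1" "\<sigma> a = 1 \<Longrightarrow> ones \<ge> 1"
    unfolding zeros_def ones_def using assms(1,2)
    by (auto simp: Suc_le_eq card_gt_0_iff)
  moreover have "majority \<sigma> (insert b (W - {a})) =
      (if zeros - (if \<sigma> a = 0 then 1 else 0) + (if \<sigma> b = 0 then 1 else 0)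
        > ones - (if \<sigma> a = 1 then 1 else 0) + (if \<sigma> b = 1 then 1 else 0) then 0 else 1)"
    unfolding majority_def zeros_def ones_def card_filter_exchange[OF assms(1-3)] by (rule refl)
  moreover have "majority \<sigma> W = (if zeros > ones then 0 else 1)"
    unfolding majority_def zeros_def ones_def by (rule refl)
  ultimately show ?thesis
    using assms(4-6) by (auto split: if_splits)
qed

lemma insert_eq_insert_imp:
  assumes "insert a A = insert b B" "a \<notin> A" "a \<noteq> b"
  shows "A = insert b (B - {a})"
proof -
  have "A = insert a A - {a}"
    using assms(2) by simp
  also have "\<dots> = insert b (B - {a})"
    unfolding assms(1) using assms(3) by auto
  finally show ?thesis .
qed

lemma majority_sliding_window:
  fixes f :: "int \<Rightarrow> int" and m :: int
  assumes inj: "inj_on f {0..m + 1}" and "0 \<le> m"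
    and two: "\<sigma> (f 0) \<in> {0, 1}" "\<sigma> (f (m + 1)) \<in> {0, 1}"
    and change: "majority \<sigma> (f ` {0..m}) \<noteq> majority \<sigma> (f ` {1..m + 1})"
  shows "\<sigma> (f 0) = majority \<sigma> (f ` {0..m}) \<and> \<sigma> (f (m + 1)) = majority \<sigma> (f ` {1..m + 1})"
proof -
  define W where "W = f ` {0..m}"
  define W' where "W' = f ` {1..m + 1}"
  have "insert 0 {1..m + 1} = insert (m + 1) {0..m}"
    using \<open>0 \<le> m\<close> by auto
  then have swap: "insert (f 0) W' = insert (f (m + 1)) W"
    unfolding W_def W'_def by (metis image_insert)
  have fresh: "f 0 \<notin> W'" "f (m + 1) \<notin> W" "f 0 \<noteq> f (m + 1)"
    unfolding W_def W'_def using inj \<open>0 \<le> m\<close> by (auto simp: inj_on_eq_iff)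
  have mem: "f 0 \<in> W" "f (m + 1) \<in> W'"
    unfolding W_def W'_def using \<open>0 \<le> m\<close> by auto
  have fin: "finite W" "finite W'"
    unfolding W_def W'_def by simp_all
  have "\<sigma> (f 0) = majority \<sigma> W"
  proof (rule ccontr)
    assume "\<sigma> (f 0) \<noteq> majority \<sigma> W"
    then have "majority \<sigma> W' = majority \<sigma> W"
      using insert_eq_insert_imp[OF swap fresh(1,3)] majority_exchange[OF fin(1) mem(1) fresh(2) two]
      by simp
    then show False
      using change unfolding W_def W'_def by simp
  qed
  moreover have "\<sigma> (f (m + 1)) = majority \<sigma> W'"
  proof (rule ccontr)
    assume "\<sigma> (f (m + 1)) \<noteq> majority \<sigma> W'"
    then have "majority \<sigma> W = majority \<sigma> W'"
      using insert_eq_insert_imp[OF swap[symmetric] fresh(2) fresh(3)[symmetric]]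
        majority_exchange[OF fin(2) mem(2) fresh(1) two(2,1)]
      by simp
    then show False
      using change unfolding W_def W'_def by simp
  qed
  ultimately show ?thesis
    unfolding W_def W'_def ..
qed

lemma maj_change_window_ends:
  assumes n: "n \<ge> 1" and two: "\<forall>k \<in> cells n. \<sigma> k \<in> {0, 1}"
    and change: "maj n r \<sigma> k \<noteq> maj n r \<sigma> (k + 1)"
  shows "\<sigma> ((k - int r) mod n) = maj n r \<sigma> k \<and> \<sigma> ((k + 1 + int r) mod n) = maj n r \<sigma> (k + 1)"
proof -
  define m where "m = (2 * int r) mod n"
  define f where "f t = (k - int r + t) mod n" for t
  have m: "0 \<le> m" "m < n"
    unfolding m_def using n by simp_all
  have windows: "cint n (k - int r) (k + int r) = f ` {0..m}"
      "cint n (k + 1 - int r) (k + 1 + int r) = f ` {1..m + 1}"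
  proof -
    have shift: "{1..m + 1} = (+) 1 ` {0..m}"
      by (simp add: image_add_atLeastAtMost add.commute)
    have "(\<lambda>t. (k + 1 - int r + t) mod n) ` {0..m} = f ` {1..m + 1}"
      unfolding shift f_def image_image by (simp add: algebra_simps)
    then show "cint n (k + 1 - int r) (k + 1 + int r) = f ` {1..m + 1}"
      unfolding cint_image m_def by (simp add: algebra_simps)
  qed (simp add: cint_image f_def m_def)
  txt \<open>A window covering the whole circle would not move from \<open>k\<close> to \<open>k + 1\<close>.\<close>
  have "m \<noteq> n - 1"
  proof
    assume "m = n - 1"
    then have "cint n (k - int r) (k + int r) = cint n (k + 1 - int r) (k + 1 + int r)"
      using cint_full[OF n] unfolding m_def by simp
    then show False
      using change unfolding maj_eq_majority by (simp add: algebra_simps)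
  qed
  then have "inj_on f {0..m + 1}"
    using m inj_on_mod_shift[of "k - int r" n] unfolding f_def
    by (auto elim: inj_on_subset)
  moreover have "\<sigma> (f t) \<in> {0, 1}" for t
    unfolding f_def using two mod_in_cells[OF n] by blast
  moreover have "majority \<sigma> (f ` {0..m}) \<noteq> majority \<sigma> (f ` {1..m + 1})"
    using change unfolding maj_eq_majority windows[symmetric] by (simp add: algebra_simps)
  ultimately have "\<sigma> (f 0) = majority \<sigma> (f ` {0..m}) \<and> \<sigma> (f (m + 1)) = majority \<sigma> (f ` {1..m + 1})"
    using majority_sliding_window m(1) by blast
  moreover have "f 0 = (k - int r) mod n"
    unfolding f_def by simp
  moreover have "f (m + 1) = (k + 1 + int r) mod n"
  proof -
    have "f (m + 1) = (k + 1 - int r + (2 * int r) mod n) mod n"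
      unfolding f_def m_def by (simp add: algebra_simps)
    also have "\<dots> = (k + 1 - int r + 2 * int r) mod n"
      by (rule mod_add_right_eq)
    also have "\<dots> = (k + 1 + int r) mod n"
      by (simp add: algebra_simps)
    finally show ?thesis .
  qed
  ultimately show ?thesis
    unfolding maj_eq_majority windows by (simp add: algebra_simps)
qed

section \<open>Runs of equal values and blocks\<close>

lemma even_card_changes_iff:
  fixes u :: "int \<Rightarrow> 'a" and L :: int
  assumes two: "\<forall>t. u t \<in> {a, b}" and "0 \<le> L"
  shows "even (card {t \<in> {1..L}. u (t - 1) \<noteq> u t}) \<longleftrightarrow> u L = u 0"
  using \<open>0 \<le> L\<close>
proof (induction L rule: int_ge_induct)
  case base
  then show ?case by simp
next
  case (step L)
  have "{1..L + 1} = insert (L + 1) {1..L}"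
    using step.hyps by auto
  then have split: "{t \<in> {1..L + 1}. u (t - 1) \<noteq> u t} = (if u L \<noteq> u (L + 1)
      then insert (L + 1) {t \<in> {1..L}. u (t - 1) \<noteq> u t} else {t \<in> {1..L}. u (t - 1) \<noteq> u t})"
    by auto
  show ?case
  proof (cases "u L = u (L + 1)")
    case True
    then show ?thesis
      using split step.IH by simp
  next
    case False
    have "card (insert (L + 1) {t \<in> {1..L}. u (t - 1) \<noteq> u t})
        = Suc (card {t \<in> {1..L}. u (t - 1) \<noteq> u t})"
      by (rule card_insert_disjoint) (auto intro: finite_subset[of _ "{1..L}"])
    then have "card {t \<in> {1..L + 1}. u (t - 1) \<noteq> u t} = Suc (card {t \<in> {1..L}. u (t - 1) \<noteq> u t})"
      unfolding split using False by simp
    moreover have "u (L + 1) = u 0 \<longleftrightarrow> u L \<noteq> u 0"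
      using two False by (metis insert_iff singletonD)
    ultimately show ?thesis
      using step.IH by simp
  qed
qed

text \<open>For constant \<open>u\<close> the \<open>LEAST\<close> below ranges over the empty set and is unspecified;
  lemmas that need an actual change assume \<open>u t \<noteq> u 0\<close>.\<close>

definition first_change :: "(nat \<Rightarrow> 'a) \<Rightarrow> nat" where
  "first_change u = (LEAST t. u (Suc t) \<noteq> u t)"

lemma constant_upto_first_change: "s \<le> first_change u \<Longrightarrow> u s = u 0"
proof (induction s)
  case (Suc s)
  then have "u (Suc s) = u s"
    using not_less_Least[of s "\<lambda>t. u (Suc t) \<noteq> u t"] unfolding first_change_def by simp
  then show ?case
    using Suc by simp
qed simp

lemma first_change_le: "u (Suc t) \<noteq> u t \<Longrightarrow> first_change u \<le> t"
  unfolding first_change_def by (rule Least_le)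

lemma first_change_less: "u t \<noteq> u 0 \<Longrightarrow> first_change u < t"
  using constant_upto_first_change by (metis not_le_imp_less)

lemma first_change_changes:
  assumes "u t \<noteq> u 0"
  shows "u (Suc (first_change u)) \<noteq> u (first_change u)"
proof -
  have "\<exists>s. u (Suc s) \<noteq> u s"
  proof (rule ccontr)
    assume "\<not> ?thesis"
    then have "u s = u 0" for s
      by (induction s) auto
    then show False
      using assms by simp
  qed
  then show ?thesis
    unfolding first_change_def by (rule LeastI_ex)
qed

lemma first_change_eqI:
  assumes "\<And>s. s \<le> t \<Longrightarrow> u s = u 0" and "u (Suc t) \<noteq> u t"
  shows "first_change u = t"
  unfolding first_change_def
proof (rule Least_equality)
  fix s assume change: "u (Suc s) \<noteq> u s"
  show "t \<le> s"
  proof (rule ccontr)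
    assume "\<not> t \<le> s"
    then show False
      using change assms(1)[of s] assms(1)[of "Suc s"] by simp
  qed
qed (fact assms(2))

definition boundary :: "int \<Rightarrow> (int \<Rightarrow> nat) \<Rightarrow> int \<Rightarrow> bool" where
  "boundary n \<sigma> k \<longleftrightarrow> \<sigma> ((k - 1) mod n) \<noteq> \<sigma> (k mod n)"

lemma boundary_mod: "boundary n \<sigma> (k mod n) = boundary n \<sigma> k"
  unfolding boundary_def by (simp add: mod_diff_left_eq)

lemma backward_change_iff:
  "\<sigma> ((c - int (Suc s)) mod n) \<noteq> \<sigma> ((c - int s) mod n) \<longleftrightarrow> boundary n \<sigma> (c - int s)"
  unfolding boundary_def by (simp add: algebra_simps)

lemma forward_change_iff:
  "\<sigma> ((c + int (Suc s)) mod n) \<noteq> \<sigma> ((c + int s) mod n) \<longleftrightarrow> boundary n \<sigma> (c + int s + 1)"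
  unfolding boundary_def by (auto simp: algebra_simps)

definition run_before :: "int \<Rightarrow> (int \<Rightarrow> nat) \<Rightarrow> int \<Rightarrow> nat" where
  "run_before n \<sigma> c = first_change (\<lambda>s. \<sigma> ((c - int s) mod n))"

definition run_after :: "int \<Rightarrow> (int \<Rightarrow> nat) \<Rightarrow> int \<Rightarrow> nat" where
  "run_after n \<sigma> c = first_change (\<lambda>s. \<sigma> ((c + int s) mod n))"

text \<open>The maximal run of equal values through \<open>c\<close>: for non-constant \<open>\<sigma>\<close> the block of
  \<open>B(\<sigma>)\<close> containing \<open>c\<close>.\<close>

definition block_around :: "int \<Rightarrow> (int \<Rightarrow> nat) \<Rightarrow> int \<Rightarrow> int \<times> int" where
  "block_around n \<sigma> c = ((c - int (run_before n \<sigma> c)) mod n, (c + int (run_after n \<sigma> c)) mod n)"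

lemma run_constant:
  assumes "0 \<le> s" "s \<le> int (run_before n \<sigma> c) + int (run_after n \<sigma> c)"
  shows "\<sigma> ((c - int (run_before n \<sigma> c) + s) mod n) = \<sigma> (c mod n)"
proof (cases "s \<le> int (run_before n \<sigma> c)")
  case True
  then have "nat (int (run_before n \<sigma> c) - s) \<le> first_change (\<lambda>t. \<sigma> ((c - int t) mod n))"
    using assms(1) unfolding run_before_def by simp
  then have "\<sigma> ((c - int (nat (int (run_before n \<sigma> c) - s))) mod n) = \<sigma> (c mod n)"
    by (auto dest: constant_upto_first_change)
  then show ?thesis
    using True by (simp add: algebra_simps)
next
  case False
  then have "nat (s - int (run_before n \<sigma> c)) \<le> first_change (\<lambda>t. \<sigma> ((c + int t) mod n))"
    using assms(2) unfolding run_after_def by simp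
  then have "\<sigma> ((c + int (nat (s - int (run_before n \<sigma> c)))) mod n) = \<sigma> (c mod n)"
    by (auto dest: constant_upto_first_change)
  then show ?thesis
    using False by (simp add: algebra_simps)
qed

context
  fixes n :: int and \<sigma> :: "int \<Rightarrow> nat"
  assumes n: "n \<ge> 1" and two_valued: "\<forall>k \<in> cells n. \<sigma> k \<in> {0, 1}"
begin

lemma blocks_iff:
  "(p, q) \<in> blocks n \<sigma> \<longleftrightarrow> p \<in> cells n \<and> q \<in> cells n \<and> (\<forall>e \<in> cint n p q. \<sigma> e = \<sigma> p)
     \<and> boundary n \<sigma> p \<and> boundary n \<sigma> (q + 1)"
proof
  assume "(p, q) \<in> blocks n \<sigma>"
  then obtain \<beta> where \<beta>: "\<beta> \<in> {0, 1}" "(p, q) \<in> blocks_of n \<beta> \<sigma>"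
    unfolding blocks_def by auto
  then have pq: "p \<in> cells n" "q \<in> cells n"
    unfolding blocks_of_def by auto
  then have "\<sigma> p = \<beta>" "\<sigma> q = \<beta>"
    using \<beta>(2) cint_left_mem[OF n] cint_right_mem[OF n] unfolding blocks_of_def by auto
  then show "p \<in> cells n \<and> q \<in> cells n \<and> (\<forall>e \<in> cint n p q. \<sigma> e = \<sigma> p)
     \<and> boundary n \<sigma> p \<and> boundary n \<sigma> (q + 1)"
    using \<beta> pq unfolding blocks_of_def boundary_def cells_def by auto
next
  assume block: "p \<in> cells n \<and> q \<in> cells n \<and> (\<forall>e \<in> cint n p q. \<sigma> e = \<sigma> p)
     \<and> boundary n \<sigma> p \<and> boundary n \<sigma> (q + 1)"
  then have "\<sigma> q = \<sigma> p"
    using cint_right_mem[OF n] by blast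
  moreover have "\<sigma> p \<in> {0, 1}" "\<sigma> ((p - 1) mod n) \<in> {0, 1}" "\<sigma> ((q + 1) mod n) \<in> {0, 1}"
    using two_valued block mod_in_cells[OF n] by blast+
  ultimately have "(p, q) \<in> blocks_of n (\<sigma> p) \<sigma>"
    using block unfolding blocks_of_def boundary_def cells_def by auto
  then show "(p, q) \<in> blocks n \<sigma>"
    unfolding blocks_def using \<open>\<sigma> p \<in> {0, 1}\<close> by auto
qed

lemma runs_in_block:
  assumes block: "(p, q) \<in> blocks n \<sigma>" and c: "c \<in> cint n p q"
  shows "run_before n \<sigma> c = nat ((c - p) mod n)"
    and "run_after n \<sigma> c = nat ((q - p) mod n - (c - p) mod n)"
proof -
  define B where "B = (c - p) mod n"
  define D where "D = (q - p) mod n"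
  have pq: "p \<in> cells n" "q \<in> cells n" "\<forall>e \<in> cint n p q. \<sigma> e = \<sigma> p"
      "boundary n \<sigma> p" "boundary n \<sigma> (q + 1)"
    using block blocks_iff by blast+
  have BD: "0 \<le> B" "B \<le> D" "D < n"
    using c n unfolding B_def D_def cint_iff[OF n] by simp_all
  have shift: "(c + x) mod n = (p + (B + x)) mod n" for x
  proof -
    have "(p + (B + x)) mod n = ((c - p) mod n + (p + x)) mod n"
      unfolding B_def by (simp add: algebra_simps)
    also have "\<dots> = (c + x) mod n"
      by (simp add: mod_add_left_eq)
    finally show ?thesis ..
  qed
  have const: "\<sigma> ((p + s) mod n) = \<sigma> p" if "0 \<le> s" "s \<le> D" for s
    using pq(3) that unfolding cint_image D_def by auto
  show "run_before n \<sigma> c = nat B"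
    unfolding run_before_def
  proof (rule first_change_eqI)
    show "\<sigma> ((c - int s) mod n) = \<sigma> ((c - int 0) mod n)" if "s \<le> nat B" for s
      using shift[of "- int s"] shift[of 0] const[of "B - int s"] const[of B] that BD by simp
    show "\<sigma> ((c - int (Suc (nat B))) mod n) \<noteq> \<sigma> ((c - int (nat B)) mod n)"
      unfolding backward_change_iff using shift[of "- B"] BD pq(1,4) boundary_mod[of n \<sigma> "c - B"]
      by (simp add: cells_def)
  qed
  show "run_after n \<sigma> c = nat (D - B)"
    unfolding run_after_def
  proof (rule first_change_eqI)
    show "\<sigma> ((c + int s) mod n) = \<sigma> ((c + int 0) mod n)" if "s \<le> nat (D - B)" for s
      using shift[of "int s"] shift[of 0] const[of "B + int s"] const[of B] that BD by simp
    have "(c + int (nat (D - B)) + 1) mod n = (D + (p + 1)) mod n"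
      using shift[of "D - B + 1"] BD by (simp add: algebra_simps)
    also have "\<dots> = (q + 1) mod n"
      unfolding D_def by (simp add: mod_add_left_eq)
    finally show "\<sigma> ((c + int (Suc (nat (D - B)))) mod n) \<noteq> \<sigma> ((c + int (nat (D - B))) mod n)"
      unfolding forward_change_iff using pq(5) boundary_mod[of n \<sigma>] by metis
  qed
qed

lemma block_around_unique:
  assumes block: "(p, q) \<in> blocks n \<sigma>" and c: "c \<in> cint n p q"
  shows "block_around n \<sigma> c = (p, q)"
proof -
  have pq: "p \<in> cells n" "q \<in> cells n" "(c - p) mod n \<le> (q - p) mod n"
    using block blocks_iff c cint_iff[OF n] by blast+
  have "(c - (c - p) mod n) mod n = p"
    using pq(1) by (simp add: mod_diff_right_eq cells_def)
  moreover have "(c + ((q - p) mod n - (c - p) mod n)) mod n = q"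
    using mod_diff_add_eq[where a = "q - p" and b = "c - p" and c = c and n = n] pq(2)
    by (simp add: algebra_simps cells_def)
  ultimately show ?thesis
    unfolding block_around_def runs_in_block[OF assms] using pq(3) n by simp
qed

lemma runs_boundaries:
  assumes c: "c \<in> cells n" and e: "e \<in> cells n" "\<sigma> e \<noteq> \<sigma> c"
  shows "boundary n \<sigma> (c - int (run_before n \<sigma> c))"
    and "boundary n \<sigma> (c + int (run_after n \<sigma> c) + 1)"
    and "int (run_before n \<sigma> c) + int (run_after n \<sigma> c) < n - 1"
proof -
  define ub where "ub s = \<sigma> ((c - int s) mod n)" for s
  define uf where "uf s = \<sigma> ((c + int s) mod n)" for s
  define B where "B = int (run_before n \<sigma> c)"
  define F where "F = int (run_after n \<sigma> c)"
  have runs: "run_before n \<sigma> c = first_change ub" "run_after n \<sigma> c = first_change uf"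
    unfolding run_before_def run_after_def ub_def[abs_def] uf_def[abs_def] by (rule refl)+
  have cmod: "c mod n = c" "e mod n = e"
    using c e unfolding cells_def by simp_all
  have ub_e: "ub (nat ((c - e) mod n)) \<noteq> ub 0"
    unfolding ub_def using n cmod e(2) by (simp add: mod_diff_right_eq)
  have "B < (c - e) mod n" "ub (Suc (nat B)) \<noteq> ub (nat B)"
    using first_change_less[OF ub_e] first_change_changes[OF ub_e] n unfolding B_def runs by simp_all
  moreover have "(c - e) mod n < n"
    using n by simp
  ultimately have before: "boundary n \<sigma> (c - B)" and "B < n"
    unfolding ub_def backward_change_iff B_def by simp_all
  then show "boundary n \<sigma> (c - int (run_before n \<sigma> c))"
    unfolding B_def by simp
  have uf_e: "uf (nat ((e - c) mod n)) \<noteq> uf 0"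
    unfolding uf_def using n cmod e(2) by (simp add: mod_add_right_eq)
  have "uf (Suc (nat F)) \<noteq> uf (nat F)"
    using first_change_changes[OF uf_e] unfolding F_def runs by simp
  then show "boundary n \<sigma> (c + int (run_after n \<sigma> c) + 1)"
    unfolding uf_def forward_change_iff F_def by simp
  txt \<open>Walking right from \<open>c\<close>, the cell \<open>c - B - 1\<close> left of the run is reached after
    \<open>n - B - 1\<close> steps.\<close>
  have wrap: "c + int (nat (n - B - 1)) = (c - B - 1) + n"
    using \<open>B < n\<close> by simp
  have "uf (nat (n - B - 1)) = \<sigma> ((c - B - 1) mod n)"
    unfolding uf_def wrap mod_add_self2 ..
  also have "\<dots> \<noteq> \<sigma> c"
    using before run_constant[of 0 n \<sigma> c] cmod unfolding boundary_def B_def by simp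
  also have "\<sigma> c = uf 0"
    unfolding uf_def using cmod by simp
  finally have "uf (nat (n - B - 1)) \<noteq> uf 0" .
  then have "F < n - B - 1"
    using first_change_less[of uf] \<open>B < n\<close> unfolding F_def runs by fastforce
  then show "int (run_before n \<sigma> c) + int (run_after n \<sigma> c) < n - 1"
    unfolding B_def F_def by simp
qed

lemma block_around_in_blocks:
  assumes c: "c \<in> cells n" and e: "e \<in> cells n" "\<sigma> e \<noteq> \<sigma> c"
  shows "block_around n \<sigma> c \<in> blocks n \<sigma> \<and> c \<in> cint n (fst (block_around n \<sigma> c)) (snd (block_around n \<sigma> c))"
proof -
  define B where "B = int (run_before n \<sigma> c)"
  define F where "F = int (run_after n \<sigma> c)"
  define p where "p = (c - B) mod n"
  define q where "q = (c + F) mod n"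
  have BF: "0 \<le> B" "0 \<le> F" "B + F < n - 1"
    using runs_boundaries(3)[OF assms] unfolding B_def F_def by simp_all
  have "(q - p) mod n = (c + F - (c - B)) mod n"
    unfolding p_def q_def by (rule mod_diff_eq)
  then have qp: "(q - p) mod n = B + F"
    using BF by simp
  have "(c - p) mod n = (c - (c - B)) mod n"
    unfolding p_def by (rule mod_diff_right_eq)
  then have cp: "(c - p) mod n = B"
    using BF by simp
  have const: "\<sigma> ((p + s) mod n) = \<sigma> c" if "0 \<le> s" "s \<le> B + F" for s
    using run_constant[OF that[unfolded B_def F_def]] c
    unfolding p_def B_def cells_def by (simp add: mod_add_left_eq)
  then have "\<sigma> p = \<sigma> c"
    using const[of 0] BF unfolding p_def by simp
  then have "\<forall>x \<in> cint n p q. \<sigma> x = \<sigma> p"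
    using const unfolding cint_image qp by auto
  moreover have "boundary n \<sigma> p"
    unfolding p_def boundary_mod B_def by (fact runs_boundaries(1)[OF assms])
  moreover have "boundary n \<sigma> (q + 1)"
    using runs_boundaries(2)[OF assms] boundary_mod[of n \<sigma> "q + 1"] boundary_mod[of n \<sigma> "c + F + 1"]
    unfolding q_def F_def by (simp add: mod_add_left_eq)
  ultimately have "(p, q) \<in> blocks n \<sigma>"
    unfolding blocks_iff p_def q_def using mod_in_cells[OF n] by blast
  moreover have "c \<in> cint n p q"
    unfolding cint_iff[OF n] cp qp using c BF by simp
  ultimately show ?thesis
    unfolding block_around_def p_def q_def B_def F_def by simp
qed

lemma block_containing_in_blocks:
  assumes "e \<in> cells n" "\<sigma> e \<noteq> \<sigma> (c mod n)"
  shows "block_containing n \<sigma> c \<in> blocks n \<sigma> \<and> \<sigma> (fst (block_containing n \<sigma> c)) = \<sigma> (c mod n)"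
proof -
  obtain p q where around: "block_around n \<sigma> (c mod n) = (p, q)"
    by fastforce
  then have block: "(p, q) \<in> blocks n \<sigma>" "c mod n \<in> cint n p q"
    using block_around_in_blocks[OF mod_in_cells[OF n] assms] by simp_all
  have "block_containing n \<sigma> c = (p, q)"
    unfolding block_containing_def
    by (rule the_equality) (use block block_around_unique around in fastforce)+
  then show ?thesis
    using block blocks_iff by fastforce
qed

lemma inj_on_fst_blocks: "inj_on fst (blocks n \<sigma>)"
proof (rule inj_onI)
  fix X Y assume X: "X \<in> blocks n \<sigma>" and Y: "Y \<in> blocks n \<sigma>" and "fst X = fst Y"
  then obtain p q q' where pq: "X = (p, q)" "Y = (p, q')"
    by (metis prod.collapse)
  then have "p \<in> cells n"
    using X blocks_iff by blast
  then have "block_around n \<sigma> p = X" "block_around n \<sigma> p = Y"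
    using block_around_unique X Y cint_left_mem[OF n] unfolding pq by blast+
  then show "X = Y"
    by simp
qed

lemma fst_block_around_boundary:
  assumes "p \<in> cells n" "boundary n \<sigma> p"
  shows "fst (block_around n \<sigma> p) = p"
proof -
  have "run_before n \<sigma> p = 0"
    unfolding run_before_def
    by (rule first_change_eqI) (use assms(2) backward_change_iff[where s = 0] in simp_all)
  then show ?thesis
    using assms(1) unfolding block_around_def cells_def by simp
qed

lemma block_starts_within:
  assumes y: "boundary n \<sigma> (y + 1)"
  shows "fst ` {Y \<in> blocks n \<sigma>. cint n (fst Y) (snd Y) \<subseteq> cint n x y} = {p \<in> cint n x y. boundary n \<sigma> p}"
proof
  show "fst ` {Y \<in> blocks n \<sigma>. cint n (fst Y) (snd Y) \<subseteq> cint n x y} \<subseteq> {p \<in> cint n x y. boundary n \<sigma> p}"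
    using blocks_iff cint_left_mem[OF n] by force
next
  show "{p \<in> cint n x y. boundary n \<sigma> p} \<subseteq> fst ` {Y \<in> blocks n \<sigma>. cint n (fst Y) (snd Y) \<subseteq> cint n x y}"
  proof
    fix p assume "p \<in> {p \<in> cint n x y. boundary n \<sigma> p}"
    then have p: "p \<in> cells n" "boundary n \<sigma> p" "(p - x) mod n \<le> (y - x) mod n"
      by (simp_all add: cint_iff[OF n])
    define q where "q = snd (block_around n \<sigma> p)"
    define F where "F = run_after n \<sigma> p"
    define T where "T = nat ((y - x) mod n - (p - x) mod n)"
    have "\<sigma> ((p - 1) mod n) \<noteq> \<sigma> p"
      using p(1,2) unfolding boundary_def cells_def by simp
    then have block: "(p, q) \<in> blocks n \<sigma>"
      using block_around_in_blocks[OF p(1) mod_in_cells[OF n]] fst_block_around_boundary[OF p(1,2)]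
      unfolding q_def by (metis prod.collapse)
    have "(p + int T + 1) mod n = (y + 1) mod n"
      using p(3) mod_diff_add_eq[where a = "y - x" and b = "p - x" and c = "p + 1" and n = n]
      unfolding T_def by (simp add: algebra_simps)
    then have "boundary n \<sigma> (p + int T + 1)"
      using y boundary_mod by metis
    then have "F \<le> T"
      unfolding F_def run_after_def by (intro first_change_le) (simp only: forward_change_iff)
    moreover have "(q - p) mod n = int F mod n"
      unfolding q_def F_def block_around_def by (simp add: mod_diff_left_eq)
    ultimately have "(p - x) mod n + (q - p) mod n \<le> (y - x) mod n"
      using p(3) zmod_le_nonneg_dividend[of "int F" n] unfolding T_def by simp
    then have "cint n p q \<subseteq> cint n x y"
      by (rule cint_subset[OF n])
    then show "p \<in> fst ` {Y \<in> blocks n \<sigma>. cint n (fst Y) (snd Y) \<subseteq> cint n x y}"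
      using block by force
  qed
qed

lemma block_interval_odd:
  assumes X: "X \<in> blocks n \<sigma>" and Y: "Y \<in> blocks n \<sigma>" and same: "\<sigma> (fst X) = \<sigma> (fst Y)"
  shows "odd (card (block_interval n X Y (blocks n \<sigma>)))"
proof -
  define x where "x = fst X"
  define y where "y = snd Y"
  define L where "L = (y - x) mod n"
  define u where "u t = \<sigma> ((x + t) mod n)" for t
  have x: "x \<in> cells n" "boundary n \<sigma> x"
    using X blocks_iff[of x "snd X"] unfolding x_def by simp_all
  have y: "y \<in> cells n" "boundary n \<sigma> (y + 1)" "\<sigma> y = \<sigma> x"
    using Y blocks_iff[of "fst Y" y] cint_right_mem[OF n] same unfolding x_def y_def by auto
  have L: "0 \<le> L" "L < n" "(x + L) mod n = y"
    unfolding L_def using n y(1) by (simp_all add: mod_add_right_eq cells_def)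
  have "card (block_interval n X Y (blocks n \<sigma>))
      = card (fst ` {Z \<in> blocks n \<sigma>. cint n (fst Z) (snd Z) \<subseteq> cint n x y})"
    unfolding block_interval_def x_def y_def
    by (rule card_image[symmetric]) (rule inj_on_subset[OF inj_on_fst_blocks], blast)
  also have "\<dots> = card {p \<in> cint n x y. boundary n \<sigma> p}"
    by (simp only: block_starts_within[OF y(2)])
  also have "{p \<in> cint n x y. boundary n \<sigma> p} = (\<lambda>t. (x + t) mod n) ` {t \<in> {0..L}. boundary n \<sigma> (x + t)}"
    unfolding cint_image L_def using boundary_mod by auto
  also have "card \<dots> = card {t \<in> {0..L}. boundary n \<sigma> (x + t)}"
    by (rule card_image, rule inj_on_subset[OF inj_on_mod_shift]) (use L in auto)
  also have "{t \<in> {0..L}. boundary n \<sigma> (x + t)} = insert 0 {t \<in> {1..L}. u (t - 1) \<noteq> u t}"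
    using x(2) L(1) unfolding u_def boundary_def by (auto simp: algebra_simps)
  also have "card \<dots> = Suc (card {t \<in> {1..L}. u (t - 1) \<noteq> u t})"
    by (rule card_insert_disjoint) (auto intro: finite_subset[of _ "{1..L}"])
  finally show ?thesis
    using even_card_changes_iff[of u 0 1 L] two_valued mod_in_cells[OF n] L y(3) x(1)
    unfolding u_def cells_def by auto
qed

end

lemma maj_block_window_ends:
  assumes n: "n \<ge> 1" and two: "\<forall>k \<in> cells n. \<sigma> k \<in> {0, 1}" "\<forall>k \<in> cells n. \<sigma>' k \<in> {0, 1}"
    and maj: "\<forall>k \<in> cells n. maj n r \<sigma> k = \<sigma>' k"
    and block: "(i, j) \<in> blocks n \<sigma>'"
  shows "\<sigma> ((j - int r) mod n) = \<sigma>' i \<and> \<sigma> ((i + int r) mod n) = \<sigma>' i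
    \<and> \<sigma> ((j + 1 + int r) mod n) \<noteq> \<sigma>' i"
proof -
  have ij: "i \<in> cells n" "j \<in> cells n" "\<sigma>' j = \<sigma>' i" "boundary n \<sigma>' i" "boundary n \<sigma>' (j + 1)"
    using block blocks_iff[OF n two(2)] cint_right_mem[OF n] by blast+
  have maj_mod_eq: "maj n r \<sigma> k = \<sigma>' (k mod n)" for k
    using maj mod_in_cells[OF n] maj_mod by metis
  have "maj n r \<sigma> j = \<sigma>' i" "maj n r \<sigma> (j + 1) \<noteq> \<sigma>' i"
    "maj n r \<sigma> (i - 1) \<noteq> \<sigma>' i" "maj n r \<sigma> (i - 1 + 1) = \<sigma>' i"
    using ij unfolding maj_mod_eq boundary_def cells_def by auto
  then show ?thesis
    using maj_change_window_ends[OF n two(1), of r j] maj_change_window_ends[OF n two(1), of r "i - 1"]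
    by simp
qed

theorem claim8:
  fixes n :: int and r :: nat and \<sigma> \<sigma>' :: "int \<Rightarrow> nat" and i j :: int
  assumes "r \<ge> 1" and "n \<ge> 1"
    and "\<forall>k \<in> cells n. \<sigma> k \<in> {0, 1}"
    and "\<forall>k \<in> cells n. \<sigma>' k \<in> {0, 1}"
    and "\<forall>k \<in> cells n. maj n r \<sigma> k = \<sigma>' k"
    and "(i, j) \<in> blocks n \<sigma>'"
  shows "odd (card (block_interval n (left_map n r \<sigma> (i, j)) (right_map n r \<sigma> (i, j)) (blocks n \<sigma>)))"
proof -
  define e where "e = (j + 1 + int r) mod n"
  have ends: "\<sigma> ((j - int r) mod n) = \<sigma>' i" "\<sigma> ((i + int r) mod n) = \<sigma>' i" "\<sigma> e \<noteq> \<sigma>' i"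
    using maj_block_window_ends[OF assms(2-6)] unfolding e_def by simp_all
  have "e \<in> cells n"
    unfolding e_def using mod_in_cells[OF assms(2)] .
  then have "left_map n r \<sigma> (i, j) \<in> blocks n \<sigma>" "right_map n r \<sigma> (i, j) \<in> blocks n \<sigma>"
    "\<sigma> (fst (left_map n r \<sigma> (i, j))) = \<sigma> (fst (right_map n r \<sigma> (i, j)))"
    using block_containing_in_blocks[OF assms(2,3)] ends
    unfolding left_map_def right_map_def by (metis fst_conv snd_conv)+
  then show ?thesis
    by (rule block_interval_odd[OF assms(2,3)])
qed

end
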